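(* Let $f(x)=x^5+px^4+qx^3+rx^2+sx+t$ with real coefficients, and suppose $D=0$, $L_1=0$, $L_2\neq 0$ and $D_2=0$ (so $f$ has one triple root and two simple roots). Then the triple root of $f$ is $d=C_{2,1}/L_2$, and $f(y+d)=y^3\bigl(y^2+F_7y+F_6\bigr)$ where $F_7=p+5d$ and $F_6=q+4pd+10d^2$. If $L_2>0$ (all roots real), then: (a) if $F_6>0$ and $F_7<0$: triple $<$ single $<$ single; (b) if $F_6<0$: single $<$ triple $<$ single; (c) if $F_6>0$ and $F_7>0$: single $<$ single $<$ triple.
   Context: Let $\alpha_1,\dots,\alpha_5\in\mathbb{C}$ be the roots of $f$ listed with multiplicity. $D=\prod_{1\le i<j\le 5}(\alpha_i-\alpha_j)^2$ is the discriminant of $f$. $L_2=40qs-16p^2s-8rp^3+38rpq+3p^2q^2-12q^3-45r^2$. $L_1=-264ps^2r-12p^3tq^2+36r^3pq-124srpq^2+28srp^3q+260sptq-132p^2qrt+240pr^2t+234sqr^2+32p^4tr+48ptq^3-56sp^3t-80q^2rt+194qs^2p^2-600str-6q^3sp^2+2p^2q^2r^2-12sr^2p^2-54r^4+320s^3-8q^3r^2-8r^3p^3+250qt^2-176q^2s^2+24q^4s-36p^4s^2-100p^2t^2$. $D_2=24p^2q^4s-1100q^3rt+800p^3qst-1735p^2q^2rt-3p^2qr^2s+20pq^3rs-600p^2rst-1150pq^2st+5475pqr^2t-1380pqrs^2+1500qrst+6p^3qr^3+p^4q^2r^2-128p^6rt+660pq^4t-136p^5st-3p^4q^3s-236p^4qs^2+337p^2q^2s^2+48p^5q^2t-357p^3q^3t-12p^4r^2s-45pr^3s+60q^2r^2s-8p^2q^3r^2-500p^2qt^2-24pq^2r^3-1380p^3r^2t+408p^3rs^2-4p^5qrs+1028p^4qrt+11p^3q^2rs+36p^6s^2+100p^4t^2+9p^2r^4-48q^5s+16q^4r^2+160q^3s^2+625q^2t^2-3375r^3t+900r^2s^2$.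 $C_{2,1}=6sp^3+4q^2r-3pr^2-21spq+30sr+10p^2t-25tq-p^2rq$. *)

theory Defs
  imports Complex_Main "HOL-Computational_Algebra.Polynomial"
begin

definition quintic :: "real \<Rightarrow> real \<Rightarrow> real \<Rightarrow> real \<Rightarrow> real \<Rightarrow> real poly" where
  "quintic p q r s t = [:t, s, r, q, p, 1:]"

definition roots5 :: "real poly \<Rightarrow> complex list" where
  "roots5 f = (SOME as. length as = 5 \<and>
      map_poly complex_of_real f = prod_list (map (\<lambda>a. [:-a, 1:]) as))"

definition disc5 :: "real poly \<Rightarrow> complex" where
  "disc5 f = (let as = roots5 f in
      \<Prod>i<5. \<Prod>j\<in>{i<..<5}. (as ! i - as ! j)^2)"

definition L2 :: "real \<Rightarrow> real \<Rightarrow> real \<Rightarrow> real \<Rightarrow> real \<Rightarrow> real" where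
  "L2 p q r s t = 40*q*s - 16*p^2*s - 8*r*p^3 + 38*r*p*q + 3*p^2*q^2 - 12*q^3 - 45*r^2"

definition L1 :: "real \<Rightarrow> real \<Rightarrow> real \<Rightarrow> real \<Rightarrow> real \<Rightarrow> real" where
  "L1 p q r s t = -264*p*s^2*r - 12*p^3*t*q^2 + 36*r^3*p*q - 124*s*r*p*q^2 + 28*s*r*p^3*q
     + 260*s*p*t*q - 132*p^2*q*r*t + 240*p*r^2*t + 234*s*q*r^2 + 32*p^4*t*r + 48*p*t*q^3
     - 56*s*p^3*t - 80*q^2*r*t + 194*q*s^2*p^2 - 600*s*t*r - 6*q^3*s*p^2 + 2*p^2*q^2*r^2
     - 12*s*r^2*p^2 - 54*r^4 + 320*s^3 - 8*q^3*r^2 - 8*r^3*p^3 + 250*q*t^2 - 176*q^2*s^2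
     + 24*q^4*s - 36*p^4*s^2 - 100*p^2*t^2"

definition D2 :: "real \<Rightarrow> real \<Rightarrow> real \<Rightarrow> real \<Rightarrow> real \<Rightarrow> real" where
  "D2 p q r s t = 24*p^2*q^4*s - 1100*q^3*r*t + 800*p^3*q*s*t - 1735*p^2*q^2*r*t
     - 3*p^2*q*r^2*s + 20*p*q^3*r*s - 600*p^2*r*s*t - 1150*p*q^2*s*t + 5475*p*q*r^2*t
     - 1380*p*q*r*s^2 + 1500*q*r*s*t + 6*p^3*q*r^3 + p^4*q^2*r^2 - 128*p^6*r*t + 660*p*q^4*t
     - 136*p^5*s*t - 3*p^4*q^3*s - 236*p^4*q*s^2 + 337*p^2*q^2*s^2 + 48*p^5*q^2*t
     - 357*p^3*q^3*t - 12*p^4*r^2*s - 45*p*r^3*s + 60*q^2*r^2*s - 8*p^2*q^3*r^2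
     - 500*p^2*q*t^2 - 24*p*q^2*r^3 - 1380*p^3*r^2*t + 408*p^3*r*s^2 - 4*p^5*q*r*s
     + 1028*p^4*q*r*t + 11*p^3*q^2*r*s + 36*p^6*s^2 + 100*p^4*t^2 + 9*p^2*r^4 - 48*q^5*s
     + 16*q^4*r^2 + 160*q^3*s^2 + 625*q^2*t^2 - 3375*r^3*t + 900*r^2*s^2"

definition C21 :: "real \<Rightarrow> real \<Rightarrow> real \<Rightarrow> real \<Rightarrow> real \<Rightarrow> real" where
  "C21 p q r s t = 6*s*p^3 + 4*q^2*r - 3*p*r^2 - 21*s*p*q + 30*s*r + 10*p^2*t - 25*t*q - p^2*r*q"

end

(* Over the complex numbers D = 0 gives a double root x, f = (z-x)^2 (z-b)(z-c)(z-e).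
   In these coordinates L1 = 2 ((x-b)(x-c)(x-e))^2 ((b-c)(b-e)(c-e))^2, so L1 = 0 makes x a
   triple root or produces a second double root.  For two double roots u, v and a simple root w,
   L2 and D2 are 4 (u-v)^2 Q^2 and 4 (u-v)^6 Q^4 with Q = (w-u)(w-v), so D2 = 0 would force
   L2 = 0.  For a triple root x one finds C21 = x L2, hence x = d is real, and
   L2 = 3 F6^2 (F7^2 - 4 F6), where y^2 + F7 y + F6 is the cofactor of y^3 in f(y+d).  Thus
   L2 > 0 means that this cofactor has two real roots; their position relative to 0 is read off
   from the signs of their product F6 and their sum -F7. *)

theory Submission
  imports Defs "HOL-Computational_Algebra.Fundamental_Theorem_Algebra"
begin

(* The invariants of f as polynomials over an arbitrary commutative ring, so that they can be
   evaluated at the complex roots of f. *)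

definition L1_ring :: "'a::comm_ring_1 \<Rightarrow> 'a \<Rightarrow> 'a \<Rightarrow> 'a \<Rightarrow> 'a \<Rightarrow> 'a" where
  "L1_ring p q r s t = -264*p*s^2*r - 12*p^3*t*q^2 + 36*r^3*p*q - 124*s*r*p*q^2 + 28*s*r*p^3*q
     + 260*s*p*t*q - 132*p^2*q*r*t + 240*p*r^2*t + 234*s*q*r^2 + 32*p^4*t*r + 48*p*t*q^3
     - 56*s*p^3*t - 80*q^2*r*t + 194*q*s^2*p^2 - 600*s*t*r - 6*q^3*s*p^2 + 2*p^2*q^2*r^2
     - 12*s*r^2*p^2 - 54*r^4 + 320*s^3 - 8*q^3*r^2 - 8*r^3*p^3 + 250*q*t^2 - 176*q^2*s^2
     + 24*q^4*s - 36*p^4*s^2 - 100*p^2*t^2"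

definition L2_ring :: "'a::comm_ring_1 \<Rightarrow> 'a \<Rightarrow> 'a \<Rightarrow> 'a \<Rightarrow> 'a \<Rightarrow> 'a" where
  "L2_ring p q r s t = 40*q*s - 16*p^2*s - 8*r*p^3 + 38*r*p*q + 3*p^2*q^2 - 12*q^3 - 45*r^2"

definition D2_ring :: "'a::comm_ring_1 \<Rightarrow> 'a \<Rightarrow> 'a \<Rightarrow> 'a \<Rightarrow> 'a \<Rightarrow> 'a" where
  "D2_ring p q r s t = 24*p^2*q^4*s - 1100*q^3*r*t + 800*p^3*q*s*t - 1735*p^2*q^2*r*t
     - 3*p^2*q*r^2*s + 20*p*q^3*r*s - 600*p^2*r*s*t - 1150*p*q^2*s*t + 5475*p*q*r^2*t
     - 1380*p*q*r*s^2 + 1500*q*r*s*t + 6*p^3*q*r^3 + p^4*q^2*r^2 - 128*p^6*r*t + 660*p*q^4*t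
     - 136*p^5*s*t - 3*p^4*q^3*s - 236*p^4*q*s^2 + 337*p^2*q^2*s^2 + 48*p^5*q^2*t
     - 357*p^3*q^3*t - 12*p^4*r^2*s - 45*p*r^3*s + 60*q^2*r^2*s - 8*p^2*q^3*r^2
     - 500*p^2*q*t^2 - 24*p*q^2*r^3 - 1380*p^3*r^2*t + 408*p^3*r*s^2 - 4*p^5*q*r*s
     + 1028*p^4*q*r*t + 11*p^3*q^2*r*s + 36*p^6*s^2 + 100*p^4*t^2 + 9*p^2*r^4 - 48*q^5*s
     + 16*q^4*r^2 + 160*q^3*s^2 + 625*q^2*t^2 - 3375*r^3*t + 900*r^2*s^2"

definition C21_ring :: "'a::comm_ring_1 \<Rightarrow> 'a \<Rightarrow> 'a \<Rightarrow> 'a \<Rightarrow> 'a \<Rightarrow> 'a" where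
  "C21_ring p q r s t = 6*s*p^3 + 4*q^2*r - 3*p*r^2 - 21*s*p*q + 30*s*r + 10*p^2*t - 25*t*q - p^2*r*q"

lemma L1_eq_L1_ring: "L1 = L1_ring"
  by (simp add: fun_eq_iff L1_def L1_ring_def)

lemma L2_eq_L2_ring: "L2 = L2_ring"
  by (simp add: fun_eq_iff L2_def L2_ring_def)

lemma D2_eq_D2_ring: "D2 = D2_ring"
  by (simp add: fun_eq_iff D2_def D2_ring_def)

lemma C21_eq_C21_ring: "C21 = C21_ring"
  by (simp add: fun_eq_iff C21_def C21_ring_def)

lemma of_real_L1_ring:
  "(of_real (L1_ring p q r s t) :: 'a::{real_algebra_1,comm_ring_1})
    = L1_ring (of_real p) (of_real q) (of_real r) (of_real s) (of_real t)"
  by (simp add: L1_ring_def)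

lemma of_real_L2_ring:
  "(of_real (L2_ring p q r s t) :: 'a::{real_algebra_1,comm_ring_1})
    = L2_ring (of_real p) (of_real q) (of_real r) (of_real s) (of_real t)"
  by (simp add: L2_ring_def)

lemma of_real_D2_ring:
  "(of_real (D2_ring p q r s t) :: 'a::{real_algebra_1,comm_ring_1})
    = D2_ring (of_real p) (of_real q) (of_real r) (of_real s) (of_real t)"
  by (simp add: D2_ring_def)

lemma of_real_C21_ring:
  "(of_real (C21_ring p q r s t) :: 'a::{real_algebra_1,comm_ring_1})
    = C21_ring (of_real p) (of_real q) (of_real r) (of_real s) (of_real t)"
  by (simp add: C21_ring_def)

lemma quintic_vieta:
  fixes x1 x2 x3 x4 x5 :: "'a::comm_ring_1"
  assumes "[:t,s,r,q,p,1:] = [:-x1,1:] * [:-x2,1:] * [:-x3,1:] * [:-x4,1:] * [:-x5,1:]"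
  shows "p = -(x1+x2+x3+x4+x5)"
    and "q = x1*x2 + x1*x3 + x1*x4 + x1*x5 + x2*x3 + x2*x4 + x2*x5 + x3*x4 + x3*x5 + x4*x5"
    and "r = -(x1*x2*x3 + x1*x2*x4 + x1*x2*x5 + x1*x3*x4 + x1*x3*x5 + x1*x4*x5
        + x2*x3*x4 + x2*x3*x5 + x2*x4*x5 + x3*x4*x5)"
    and "s = x1*x2*x3*x4 + x1*x2*x3*x5 + x1*x2*x4*x5 + x1*x3*x4*x5 + x2*x3*x4*x5"
    and "t = -(x1*x2*x3*x4*x5)"
  using assms by (simp_all add: algebra_simps)

lemma L1_ring_double_root:
  fixes x b c e :: "'a::idom"
  assumes "[:t,s,r,q,p,1:] = [:-x,1:]^2 * [:-b,1:] * [:-c,1:] * [:-e,1:]"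
  shows "L1_ring p q r s t = 2 * ((x-b)*(x-c)*(x-e))^2 * ((b-c)*(b-e)*(c-e))^2"
  unfolding L1_ring_def quintic_vieta[OF assms[unfolded power2_eq_square]]
  by algebra

lemma invariants_two_double_roots:
  fixes u v w :: "'a::idom"
  assumes "[:t,s,r,q,p,1:] = [:-u,1:]^2 * [:-v,1:]^2 * [:-w,1:]"
  shows "L2_ring p q r s t = 4 * (u-v)^2 * ((w-u)*(w-v))^2"
    and "D2_ring p q r s t = 4 * (u-v)^6 * ((w-u)*(w-v))^4"
proof -
  note coeffs = quintic_vieta[OF assms[unfolded power2_eq_square mult.assoc[symmetric]]]
  show "L2_ring p q r s t = 4 * (u-v)^2 * ((w-u)*(w-v))^2"
    unfolding L2_ring_def coeffs by algebra
  show "D2_ring p q r s t = 4 * (u-v)^6 * ((w-u)*(w-v))^4"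
    unfolding D2_ring_def coeffs by algebra
qed

lemma invariants_triple_root:
  fixes x y z :: "'a::idom"
  assumes "[:t,s,r,q,p,1:] = [:-x,1:]^3 * [:-y,1:] * [:-z,1:]"
  shows "C21_ring p q r s t = x * L2_ring p q r s t"
    and "L2_ring p q r s t = 3 * (q + 4*p*x + 10*x^2)^2 * ((p + 5*x)^2 - 4*(q + 4*p*x + 10*x^2))"
    and "poly [:t,s,r,q,p,1:] (w + x) = w^3 * (w^2 + (p + 5*x)*w + (q + 4*p*x + 10*x^2))"
proof -
  note coeffs = quintic_vieta[OF assms[unfolded power3_eq_cube]]
  show "C21_ring p q r s t = x * L2_ring p q r s t"
    unfolding C21_ring_def L2_ring_def coeffs by algebra
  show "L2_ring p q r s t = 3 * (q + 4*p*x + 10*x^2)^2 * ((p + 5*x)^2 - 4*(q + 4*p*x + 10*x^2))"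
    unfolding L2_ring_def coeffs by algebra
  show "poly [:t,s,r,q,p,1:] (w + x) = w^3 * (w^2 + (p + 5*x)*w + (q + 4*p*x + 10*x^2))"
    unfolding coeffs by simp algebra
qed

lemma factor_of_shifted_poly:
  fixes f g :: "'a::{idom,ring_char_0} poly"
  assumes "\<And>y. poly f (y + d) = y^n * poly g y"
  shows "f = [:-d,1:]^n * (g \<circ>\<^sub>p [:-d,1:])"
proof -
  have "poly f z = poly ([:-d,1:]^n * (g \<circ>\<^sub>p [:-d,1:])) z" for z
    using assms[of "z - d"] by (simp add: poly_pcompose)
  then show ?thesis by (simp add: poly_eq_poly_eq_iff[symmetric] fun_eq_iff)
qed

lemma order_of_shifted_poly:
  fixes f g :: "'a::{idom,ring_char_0} poly"
  assumes "\<And>y. poly f (y + d) = y^n * poly g y" and "poly g 0 \<noteq> 0"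
  shows "order d f = n"
proof -
  have g': "poly (g \<circ>\<^sub>p [:-d,1:]) d \<noteq> 0"
    using assms(2) by (simp add: poly_pcompose)
  then have "[:-d,1:]^n * (g \<circ>\<^sub>p [:-d,1:]) \<noteq> 0" by auto
  then show ?thesis
    using factor_of_shifted_poly[OF assms(1)] g'
    by (simp add: order_mult order_power_n_n order_0I)
qed

lemma real_quadratic_splits:
  fixes b c :: real
  assumes "b^2 > 4*c"
  obtains \<alpha> \<beta> where "\<alpha> < \<beta>" and "[:c, b, 1:] = [:-\<alpha>,1:] * [:-\<beta>,1:]"
proof
  define \<delta> where "\<delta> = sqrt (b^2 - 4*c)"
  have "\<delta> > 0" and \<delta>2: "\<delta>^2 = b^2 - 4*c" using assms by (simp_all add: \<delta>_def)
  then show "(-b - \<delta>)/2 < (-b + \<delta>)/2" by simp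
  show "[:c, b, 1:] = [:-((-b - \<delta>)/2),1:] * [:-((-b + \<delta>)/2),1:]"
    using \<delta>2 by (simp add: field_simps power2_eq_square)
qed

lemma triple_root_layout:
  fixes f :: "real poly"
  assumes shift: "\<And>y. poly f (y + d) = y^3 * (y^2 + b*y + c)" and disc: "b^2 > 4*c"
  shows "(c > 0 \<and> b < 0 \<longrightarrow> (\<exists>\<alpha> \<beta>. d < \<alpha> \<and> \<alpha> < \<beta> \<and> f = [:-d,1:]^3 * [:-\<alpha>,1:] * [:-\<beta>,1:]))
    \<and> (c < 0 \<longrightarrow> (\<exists>\<alpha> \<beta>. \<alpha> < d \<and> d < \<beta> \<and> f = [:-d,1:]^3 * [:-\<alpha>,1:] * [:-\<beta>,1:]))
    \<and> (c > 0 \<and> b > 0 \<longrightarrow> (\<exists>\<alpha> \<beta>. \<alpha> < \<beta> \<and> \<beta> < d \<and> f = [:-d,1:]^3 * [:-\<alpha>,1:] * [:-\<beta>,1:]))"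
proof -
  obtain \<alpha> \<beta> where "\<alpha> < \<beta>" and split: "[:c, b, 1:] = [:-\<alpha>,1:] * [:-\<beta>,1:]"
    using real_quadratic_splits[OF disc] .
  then have c: "c = \<alpha> * \<beta>" and b: "b = -(\<alpha> + \<beta>)" by simp_all
  have linear: "[:-a,1:] \<circ>\<^sub>p [:-d,1:] = [:-(d + a),1:]" for a
    by (simp add: pcompose_pCons)
  have "poly f (y + d) = y^3 * poly [:c, b, 1:] y" for y
    unfolding shift by (simp add: algebra_simps power2_eq_square)
  then have "f = [:-d,1:]^3 * (([:-\<alpha>,1:] * [:-\<beta>,1:]) \<circ>\<^sub>p [:-d,1:])"
    unfolding split by (rule factor_of_shifted_poly)
  also have "\<dots> = [:-d,1:]^3 * [:-(d + \<alpha>),1:] * [:-(d + \<beta>),1:]"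
    by (simp only: pcompose_mult linear mult.assoc)
  finally have f: "f = [:-d,1:]^3 * [:-(d + \<alpha>),1:] * [:-(d + \<beta>),1:]" .
  show ?thesis
  proof (intro conjI impI)
    assume "c > 0 \<and> b < 0"
    then have "0 < \<alpha>" using \<open>\<alpha> < \<beta>\<close> unfolding b c by (smt (verit) zero_less_mult_iff)
    with f \<open>\<alpha> < \<beta>\<close> show "\<exists>\<alpha> \<beta>. d < \<alpha> \<and> \<alpha> < \<beta> \<and> f = [:-d,1:]^3 * [:-\<alpha>,1:] * [:-\<beta>,1:]"
      by (intro exI[of _ "d + \<alpha>"] exI[of _ "d + \<beta>"]) simp
  next
    assume "c < 0"
    then have "\<alpha> < 0" "0 < \<beta>" using \<open>\<alpha> < \<beta>\<close> unfolding c by (auto simp: mult_less_0_iff)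
    with f show "\<exists>\<alpha> \<beta>. \<alpha> < d \<and> d < \<beta> \<and> f = [:-d,1:]^3 * [:-\<alpha>,1:] * [:-\<beta>,1:]"
      by (intro exI[of _ "d + \<alpha>"] exI[of _ "d + \<beta>"]) simp
  next
    assume "c > 0 \<and> b > 0"
    then have "\<beta> < 0" using \<open>\<alpha> < \<beta>\<close> unfolding b c by (smt (verit) zero_less_mult_iff)
    with f \<open>\<alpha> < \<beta>\<close> show "\<exists>\<alpha> \<beta>. \<alpha> < \<beta> \<and> \<beta> < d \<and> f = [:-d,1:]^3 * [:-\<alpha>,1:] * [:-\<beta>,1:]"
      by (intro exI[of _ "d + \<alpha>"] exI[of _ "d + \<beta>"]) simp
  qed
qed

lemma roots5_factorization:
  fixes f :: "real poly"
  assumes "degree f = 5" and "lead_coeff f = 1"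
  shows "length (roots5 f) = 5 \<and> map_poly of_real f = prod_list (map (\<lambda>a. [:-a, 1:]) (roots5 f))"
proof -
  let ?F = "map_poly complex_of_real f"
  obtain as where as: "mset as = proots ?F" using ex_mset by blast
  have "degree ?F = 5" and "lead_coeff ?F = 1"
    using assms by (simp_all add: degree_map_poly coeff_map_poly)
  then have "length as = 5" and "?F = prod_list (map (\<lambda>a. [:-a, 1:]) as)"
    using size_proots_complex[of ?F] complex_poly_decompose_multiset[of ?F]
    by (simp_all add: as[symmetric] prod_mset_prod_list[symmetric] mset_map)
  then show ?thesis
    unfolding roots5_def by (rule someI[where x = as, OF conjI])
qed

lemma mset_nth_repeated:
  assumes "i < j" and "j < length xs" and "xs ! i = xs ! j"
  obtains ys where "mset xs = mset (xs!j # xs!j # ys)"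
proof
  have "xs!j \<in> set (take j xs)"
    using assms by (metis in_set_conv_nth length_take min.absorb4 nth_take)
  then have "mset (take j xs) = add_mset (xs!j) (mset (remove1 (xs!j) (take j xs)))"
    by simp
  moreover have "mset xs = mset (take j xs) + add_mset (xs!j) (mset (drop (Suc j) xs))"
    using id_take_nth_drop[OF assms(2)] by (metis mset.simps(2) mset_append)
  ultimately show "mset xs = mset (xs!j # xs!j # (remove1 (xs!j) (take j xs) @ drop (Suc j) xs))"
    by simp
qed

lemma disc5_eq_0_double_root:
  fixes f :: "real poly"
  assumes "disc5 f = 0" and "degree f = 5" and "lead_coeff f = 1"
  obtains x b c e where "map_poly complex_of_real f = [:-x,1:]^2 * [:-b,1:] * [:-c,1:] * [:-e,1:]"
proof -
  define as where "as = roots5 f"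
  have len: "length as = 5" and F: "map_poly of_real f = prod_list (map (\<lambda>a. [:-a,1:]) as)"
    using roots5_factorization[OF assms(2,3)] by (simp_all add: as_def)
  obtain i j where "i < j" "j < length as" "as!i = as!j"
    using assms(1) len unfolding disc5_def as_def[symmetric] Let_def by (auto simp: prod_zero_iff)
  then obtain ys where ys: "mset as = mset (as!j # as!j # ys)"
    by (rule mset_nth_repeated)
  then have "length as = length (as!j # as!j # ys)"
    by (metis size_mset)
  then have "length ys = 3"
    using len by simp
  then obtain b c e where ys3: "ys = [b, c, e]"
    by (auto simp: length_Suc_conv numeral_eq_Suc)
  have "prod_list (map (\<lambda>a. [:-a,1:]) as) = prod_list (map (\<lambda>a. [:-a,1:]) (as!j # as!j # ys))"
    by (simp only: prod_mset_prod_list[symmetric] mset_map ys)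
  then show ?thesis
    using F ys3 by (intro that[of "as!j" b c e])
      (simp only: list.map prod_list.Cons prod_list.Nil mult_1_right power2_eq_square mult.assoc)
qed

lemma double_root_cases:
  fixes x b c e :: "'a::comm_ring_1"
  assumes F: "F = [:-x,1:]^2 * [:-b,1:] * [:-c,1:] * [:-e,1:]"
    and "x = b \<or> x = c \<or> x = e \<or> b = c \<or> b = e \<or> c = e"
  obtains (triple) y z where "F = [:-x,1:]^3 * [:-y,1:] * [:-z,1:]"
    | (two_double) u v w where "F = [:-u,1:]^2 * [:-v,1:]^2 * [:-w,1:]"
  using assms(2)
proof (elim disjE)
  assume "x = b" then show thesis
    using triple[of c e] F by (simp only: power2_eq_square power3_eq_cube mult_ac)
next
  assume "x = c" then show thesis
    using triple[of b e] F by (simp only: power2_eq_square power3_eq_cube mult_ac)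
next
  assume "x = e" then show thesis
    using triple[of b c] F by (simp only: power2_eq_square power3_eq_cube mult_ac)
next
  assume "b = c" then show thesis
    using two_double[of x b e] F by (simp only: power2_eq_square mult_ac)
next
  assume "b = e" then show thesis
    using two_double[of x b c] F by (simp only: power2_eq_square mult_ac)
next
  assume "c = e" then show thesis
    using two_double[of x c b] F by (simp only: power2_eq_square mult_ac)
qed

lemma complex_triple_root_of_invariants:
  fixes p q r s t :: real
  assumes disc: "disc5 (quintic p q r s t) = 0" and L1: "L1 p q r s t = 0"
    and L2: "L2 p q r s t \<noteq> 0" and D2: "D2 p q r s t = 0"
  obtains y z where "[:complex_of_real t, of_real s, of_real r, of_real q, of_real p, 1:]
    = [:-of_real (C21 p q r s t / L2 p q r s t), 1:]^3 * [:-y,1:] * [:-z,1:]"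
proof -
  let ?F = "[:complex_of_real t, of_real s, of_real r, of_real q, of_real p, 1:]"
  have "map_poly complex_of_real (quintic p q r s t) = ?F"
    by (simp add: quintic_def map_poly_pCons)
  moreover have "degree (quintic p q r s t) = 5" and "lead_coeff (quintic p q r s t) = 1"
    by (simp_all add: quintic_def)
  ultimately obtain x b c e where double: "?F = [:-x,1:]^2 * [:-b,1:] * [:-c,1:] * [:-e,1:]"
    using disc5_eq_0_double_root[OF disc] by metis
  have L2_ring: "L2_ring (of_real p) (of_real q) (of_real r) (of_real s) (of_real t) \<noteq> (0::complex)"
    using L2 by (metis L2_eq_L2_ring of_real_L2_ring of_real_eq_0_iff)
  have "L1_ring (of_real p) (of_real q) (of_real r) (of_real s) (of_real t) = (0::complex)"
    using L1 by (metis L1_eq_L1_ring of_real_L1_ring of_real_0)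
  then have "x = b \<or> x = c \<or> x = e \<or> b = c \<or> b = e \<or> c = e"
    unfolding L1_ring_double_root[OF double] by auto
  with double obtain y z where triple: "?F = [:-x,1:]^3 * [:-y,1:] * [:-z,1:]"
  proof (cases rule: double_root_cases)
    case (two_double u v w)
    have "D2_ring (of_real p) (of_real q) (of_real r) (of_real s) (of_real t) = (0::complex)"
      using D2 by (metis D2_eq_D2_ring of_real_D2_ring of_real_0)
    then show ?thesis
      using L2_ring unfolding invariants_two_double_roots[OF two_double] by auto
  qed
  have "of_real (C21 p q r s t) = x * of_real (L2 p q r s t)"
    using invariants_triple_root(1)[OF triple]
    by (simp add: C21_eq_C21_ring L2_eq_L2_ring of_real_C21_ring of_real_L2_ring)
  then have "x = of_real (C21 p q r s t / L2 p q r s t)"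
    using L2 by (simp add: field_simps)
  then show ?thesis
    using triple that by simp
qed

lemma quintic_shift_at_triple_root:
  fixes p q r s t d :: real
  assumes "[:complex_of_real t, of_real s, of_real r, of_real q, of_real p, 1:]
    = [:-of_real d, 1:]^3 * [:-y,1:] * [:-z,1:]"
  shows "poly (quintic p q r s t) (w + d) = w^3 * (w^2 + (p + 5*d)*w + (q + 4*p*d + 10*d^2))"
    and "L2 p q r s t = 3 * (q + 4*p*d + 10*d^2)^2 * ((p + 5*d)^2 - 4*(q + 4*p*d + 10*d^2))"
proof -
  have "complex_of_real (poly (quintic p q r s t) (w + d))
      = of_real (w^3 * (w^2 + (p + 5*d)*w + (q + 4*p*d + 10*d^2)))"
    using invariants_triple_root(3)[OF assms, of "of_real w"] by (simp add: quintic_def)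
  then show "poly (quintic p q r s t) (w + d) = w^3 * (w^2 + (p + 5*d)*w + (q + 4*p*d + 10*d^2))"
    by (simp only: of_real_eq_iff)
  have "complex_of_real (L2 p q r s t)
      = of_real (3 * (q + 4*p*d + 10*d^2)^2 * ((p + 5*d)^2 - 4*(q + 4*p*d + 10*d^2)))"
    using invariants_triple_root(2)[OF assms] by (simp add: L2_eq_L2_ring of_real_L2_ring)
  then show "L2 p q r s t = 3 * (q + 4*p*d + 10*d^2)^2 * ((p + 5*d)^2 - 4*(q + 4*p*d + 10*d^2))"
    by (simp only: of_real_eq_iff)
qed

theorem mainTheorem10:
  fixes p q r s t :: real
  defines "f \<equiv> quintic p q r s t"
  defines "d \<equiv> C21 p q r s t / L2 p q r s t"
  defines "F7 \<equiv> p + 5*d"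
  defines "F6 \<equiv> q + 4*p*d + 10*d^2"
  assumes "disc5 f = 0" and "L1 p q r s t = 0" and "L2 p q r s t \<noteq> 0"
    and "D2 p q r s t = 0"
  shows "poly f d = 0 \<and> order d f = 3
    \<and> (\<forall>y. poly f (y + d) = y^3 * (y^2 + F7*y + F6))
    \<and> (L2 p q r s t > 0 \<longrightarrow>
        ((F6 > 0 \<and> F7 < 0 \<longrightarrow>
            (\<exists>a b. d < a \<and> a < b \<and> f = [:-d,1:]^3 * [:-a,1:] * [:-b,1:]))
       \<and> (F6 < 0 \<longrightarrow>
            (\<exists>a b. a < d \<and> d < b \<and> f = [:-d,1:]^3 * [:-a,1:] * [:-b,1:]))
       \<and> (F6 > 0 \<and> F7 > 0 \<longrightarrow>
            (\<exists>a b. a < b \<and> b < d \<and> f = [:-d,1:]^3 * [:-a,1:] * [:-b,1:]))))"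
proof -
  obtain y z where triple: "[:complex_of_real t, of_real s, of_real r, of_real q, of_real p, 1:]
      = [:-of_real d, 1:]^3 * [:-y,1:] * [:-z,1:]"
    using complex_triple_root_of_invariants assms(5-8) unfolding f_def d_def by blast
  have shift: "poly f (w + d) = w^3 * (w^2 + F7*w + F6)" for w
    unfolding f_def F7_def F6_def by (rule quintic_shift_at_triple_root(1)[OF triple])
  have L2_eq: "L2 p q r s t = 3 * F6^2 * (F7^2 - 4*F6)"
    unfolding F7_def F6_def by (rule quintic_shift_at_triple_root(2)[OF triple])
  then have "F6 \<noteq> 0" using assms(7) by auto
  then have "order d f = 3"
    using shift by (intro order_of_shifted_poly[where g = "[:F6, F7, 1:]"])
      (simp_all add: algebra_simps power2_eq_square)
  moreover have "L2 p q r s t > 0 \<Longrightarrow> F7^2 > 4*F6"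
    using L2_eq \<open>F6 \<noteq> 0\<close> by (simp add: zero_less_mult_iff)
  ultimately show ?thesis
    using shift[of 0] shift triple_root_layout[of f d F7 F6] by auto
qed

end
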